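(* Let $A$ be a non-empty set and let $f\in H_0[\ell_1(A)]_+$ be maximal. Then: (i) $f(x^* )\le f(y^* )$ whenever $x^*,y^*\in\ell_\infty(A)$ satisfy $|x^*|\le|y^*|$; (ii) $\sum_{k=1}^n f(x_k^* )\le f(\sum_{k=1}^n x_k^* )$ for every $n\in\mathbb N$ and $x_1^*,\dots,x_n^*\in\ell_\infty(A)_+$; (iii) $\|f\|_{FBL[\ell_1(A)]}=\|f\|_\infty$, where $\|f\|_\infty=\sup\{|f(x^* )|:x^*\in B_{\ell_\infty(A)}\}$.
   Context: Identify $\ell_1(A)^*$ with $\ell_\infty(A)$. $H[\ell_1(A)]$ is the vector space of positively homogeneous functions $f:\ell_\infty(A)\to\mathbb R$ ($f(\lambda x^* )=\lambda f(x^* )$ for $\lambda>0$), ordered pointwise. For $f\in H[\ell_1(A)]$, $\|f\|_{FBL[\ell_1(A)]}:=\sup\{\sum_{k=1}^n|f(x_k^* )| : n\in\mathbb N,\ x_1^*,\dots,x_n^*\in\ell_\infty(A),\ \sup_{a\in A}\sum_{k=1}^n|x_k^*(a)|\le1\}$, and $H_0[\ell_1(A)]=\{f:\|f\|_{FBL[\ell_1(A)]}<\infty\}$, with positive cone $H_0[\ell_1(A)]_+$. An element $f\in H_0[\ell_1(A)]_+$ is maximal if the only $g\in H_0[\ell_1(A)]_+$ with $g\ge f$ and $\|g\|_{FBL[\ell_1(A)]}=\|f\|_{FBL[\ell_1(A)]}$ is $g=f$. *)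

theory Defs
  imports "HOL-Analysis.Analysis"
begin

text \<open>The index set A is modelled by the (nonempty) type 'a.
  ell_inf(A) = l_1(A)^* is the set of bounded real functions on 'a.
  Functionals f on ell_inf(A) are modelled as total functions
  ('a => real) => real of which only the values on ell_inf matter.\<close>

definition linf :: "('a \<Rightarrow> real) set" where
  "linf = {x. bounded (range x)}"

definition pos_homog :: "(('a \<Rightarrow> real) \<Rightarrow> real) \<Rightarrow> bool" where
  "pos_homog f \<longleftrightarrow> (\<forall>x\<in>linf. \<forall>t::real. t > 0 \<longrightarrow> f (\<lambda>a. t * x a) = t * f x)"

definition fbl_norm :: "(('a \<Rightarrow> real) \<Rightarrow> real) \<Rightarrow> ereal" where
  "fbl_norm f = (SUP (n, xs) \<in> {(n::nat, xs::nat \<Rightarrow> 'a \<Rightarrow> real).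
        (\<forall>k<n. xs k \<in> linf) \<and> (\<forall>a. (\<Sum>k<n. \<bar>xs k a\<bar>) \<le> 1)}.
        ereal (\<Sum>k<n. \<bar>f (xs k)\<bar>))"

definition H0 :: "(('a \<Rightarrow> real) \<Rightarrow> real) set" where
  "H0 = {f. pos_homog f \<and> fbl_norm f < \<infinity>}"

definition H0_pos :: "(('a \<Rightarrow> real) \<Rightarrow> real) set" where
  "H0_pos = {f \<in> H0. \<forall>x\<in>linf. 0 \<le> f x}"

definition maximal_elem :: "(('a \<Rightarrow> real) \<Rightarrow> real) \<Rightarrow> bool" where
  "maximal_elem f \<longleftrightarrow> f \<in> H0_pos \<and>
     (\<forall>g\<in>H0_pos. (\<forall>x\<in>linf. f x \<le> g x) \<and> fbl_norm g = fbl_norm f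
        \<longrightarrow> (\<forall>x\<in>linf. g x = f x))"

definition sup_norm :: "(('a \<Rightarrow> real) \<Rightarrow> real) \<Rightarrow> ereal" where
  "sup_norm f = (SUP x \<in> {x. \<forall>a. \<bar>x a\<bar> \<le> 1}. ereal \<bar>f x\<bar>)"

end

theory Submission
  imports Defs
begin

text \<open>For f in the positive cone consider its solid superadditive envelope
  g(x) = sup {\<Sum>_k f(y_k) : \<Sum>_k |y_k| \<le> |x|}.
  It dominates f, stays positive and positively homogeneous, and its FBL norm is that of f:
  a family x_1, \<dots>, x_n with \<Sum> |x_i| \<le> 1 together with families dominated by the |x_i|
  concatenates to one family with \<Sum> |y| \<le> 1. So a maximal f equals its envelope, i.e. f(x)
  bounds every such sum. A single y with |y| \<le> |x| gives (i), the family x_1, \<dots>, x_n itself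
  gives (ii), and both norms in (iii) equal f(1), since the unit ball of l_\<infinity> is dominated by 1.\<close>

lemma linf_iff: "x \<in> linf \<longleftrightarrow> (\<exists>B. \<forall>a. \<bar>x a\<bar> \<le> B)"
  unfolding linf_def bounded_iff by auto

lemma linf_scale: "x \<in> linf \<Longrightarrow> (\<lambda>a. t * x a) \<in> linf"
  unfolding linf_iff by (metis abs_ge_zero abs_mult mult_left_mono)

lemma const_mem_linf: "(\<lambda>_. c) \<in> linf"
  unfolding linf_iff by (intro exI[of _ "\<bar>c\<bar>"]) simp

lemma linf_add: "x \<in> linf \<Longrightarrow> y \<in> linf \<Longrightarrow> (\<lambda>a. x a + y a) \<in> linf"
  unfolding linf_iff by (metis abs_triangle_ineq add_mono order_trans)

lemma linf_sum: "(\<forall>k<(n::nat). xs k \<in> linf) \<Longrightarrow> (\<lambda>a. \<Sum>k<n. xs k a) \<in> linf"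
  by (induction n) (auto intro: linf_add const_mem_linf)

lemma sum_lessThan_append:
  fixes m l :: nat and g h :: "nat \<Rightarrow> 'b::comm_monoid_add"
  shows "(\<Sum>k<m + l. if k < m then g k else h (k - m)) = (\<Sum>k<m. g k) + (\<Sum>k<l. h k)"
  by (induction l) (auto intro: sum.cong simp: add.assoc)

lemma sum_cSup_le:
  fixes S :: "nat \<Rightarrow> 'b :: {conditionally_complete_lattice, ordered_ab_group_add} set"
  assumes "\<forall>i<n. S i \<noteq> {} \<and> bdd_above (S i)"
    and "\<forall>s. (\<forall>i<n. s i \<in> S i) \<longrightarrow> (\<Sum>i<n. s i) \<le> B"
  shows "(\<Sum>i<n. Sup (S i)) \<le> B"
  using assms
proof (induction n arbitrary: B)
  case 0
  then show ?case by simp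
next
  case (Suc n)
  have "Sup (S n) \<le> B - (\<Sum>i<n. Sup (S i))"
  proof (rule cSup_least)
    show "S n \<noteq> {}" using Suc.prems by auto
  next
    fix t assume t: "t \<in> S n"
    have "(\<Sum>i<n. Sup (S i)) \<le> B - t"
    proof (rule Suc.IH)
      show "\<forall>i<n. S i \<noteq> {} \<and> bdd_above (S i)" using Suc.prems by auto
      show "\<forall>s. (\<forall>i<n. s i \<in> S i) \<longrightarrow> (\<Sum>i<n. s i) \<le> B - t"
      proof (intro allI impI)
        fix s assume s: "\<forall>i<n. s i \<in> S i"
        then have "\<forall>i<Suc n. (s(n := t)) i \<in> S i" using t by (auto simp: less_Suc_eq)
        then have "(\<Sum>i<Suc n. (s(n := t)) i) \<le> B" using Suc.prems(2) by blast
        moreover have "(\<Sum>i<n. (s(n := t)) i) = (\<Sum>i<n. s i)" by (rule sum.cong) auto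
        ultimately show "(\<Sum>i<n. s i) \<le> B - t" by (simp add: le_diff_eq add.commute)
      qed
    qed
    then show "t \<le> B - (\<Sum>i<n. Sup (S i))" by (simp add: le_diff_eq add.commute)
  qed
  then show ?case by (simp add: le_diff_eq add.commute)
qed

lemma sum_abs_le_fbl_norm:
  fixes n :: nat
  assumes "\<forall>k<n. xs k \<in> linf" "\<forall>a. (\<Sum>k<n. \<bar>xs k a\<bar>) \<le> 1"
  shows "ereal (\<Sum>k<n. \<bar>f (xs k)\<bar>) \<le> fbl_norm f"
  unfolding fbl_norm_def by (rule SUP_upper2[where i="(n, xs)"]) (use assms in auto)

lemma ereal_real_fbl_norm: "fbl_norm f < \<infinity> \<Longrightarrow> ereal (real_of_ereal (fbl_norm f)) = fbl_norm f"
  using sum_abs_le_fbl_norm[where n=0 and f=f] by (cases "fbl_norm f") auto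

lemma sum_abs_le_real_fbl_norm:
  fixes n :: nat
  assumes "fbl_norm f < \<infinity>" "\<forall>k<n. xs k \<in> linf" "\<forall>a. (\<Sum>k<n. \<bar>xs k a\<bar>) \<le> 1"
  shows "(\<Sum>k<n. \<bar>f (xs k)\<bar>) \<le> real_of_ereal (fbl_norm f)"
proof -
  have "ereal (\<Sum>k<n. \<bar>f (xs k)\<bar>) \<le> ereal (real_of_ereal (fbl_norm f))"
    using sum_abs_le_fbl_norm[OF assms(2,3), of f] unfolding ereal_real_fbl_norm[OF assms(1)] .
  then show ?thesis by simp
qed

definition dominated_sums :: "(('a \<Rightarrow> real) \<Rightarrow> real) \<Rightarrow> ('a \<Rightarrow> real) \<Rightarrow> real set" where
  "dominated_sums f x = {(\<Sum>k<n. f (ys k)) | (n::nat) ys.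
     (\<forall>k<n. ys k \<in> linf) \<and> (\<forall>a. (\<Sum>k<n. \<bar>ys k a\<bar>) \<le> \<bar>x a\<bar>)}"

lemma dominated_sumsI:
  "(\<forall>k<(n::nat). ys k \<in> linf) \<Longrightarrow> (\<forall>a. (\<Sum>k<n. \<bar>ys k a\<bar>) \<le> \<bar>x a\<bar>) \<Longrightarrow>
    (\<Sum>k<n. f (ys k)) \<in> dominated_sums f x"
  unfolding dominated_sums_def by blast

lemma dominated_sumsE:
  assumes "s \<in> dominated_sums f x"
  obtains n :: nat and ys where "s = (\<Sum>k<n. f (ys k))" "\<forall>k<n. ys k \<in> linf"
    "\<forall>a. (\<Sum>k<n. \<bar>ys k a\<bar>) \<le> \<bar>x a\<bar>"
  using assms unfolding dominated_sums_def by blast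

lemma zero_mem_dominated_sums: "0 \<in> dominated_sums f x"
  unfolding dominated_sums_def by (rule CollectI, rule exI[of _ 0]) auto

lemma dominated_sums_nonempty: "dominated_sums f x \<noteq> {}"
  using zero_mem_dominated_sums by blast

lemma mem_dominated_sums_single:
  "y \<in> linf \<Longrightarrow> \<forall>a. \<bar>y a\<bar> \<le> \<bar>x a\<bar> \<Longrightarrow> f y \<in> dominated_sums f x"
  unfolding dominated_sums_def by (rule CollectI, rule exI[of _ 1], rule exI[of _ "\<lambda>_. y"]) auto

lemma add_mem_dominated_sums:
  assumes "s \<in> dominated_sums f x" "s' \<in> dominated_sums f x'"
  shows "s + s' \<in> dominated_sums f (\<lambda>a. \<bar>x a\<bar> + \<bar>x' a\<bar>)"
proof -
  obtain m :: nat and ys where s: "s = (\<Sum>k<m. f (ys k))" "\<forall>k<m. ys k \<in> linf"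
    "\<forall>a. (\<Sum>k<m. \<bar>ys k a\<bar>) \<le> \<bar>x a\<bar>"
    using assms(1) by (rule dominated_sumsE)
  obtain l :: nat and ys' where s': "s' = (\<Sum>k<l. f (ys' k))" "\<forall>k<l. ys' k \<in> linf"
    "\<forall>a. (\<Sum>k<l. \<bar>ys' k a\<bar>) \<le> \<bar>x' a\<bar>"
    using assms(2) by (rule dominated_sumsE)
  define zs where "zs k = (if k < m then ys k else ys' (k - m))" for k
  have "\<forall>k<m + l. zs k \<in> linf" using s(2) s'(2) by (simp add: zs_def)
  moreover have "\<forall>a. (\<Sum>k<m + l. \<bar>zs k a\<bar>) \<le> \<bar>\<bar>x a\<bar> + \<bar>x' a\<bar>\<bar>"
  proof
    fix a
    show "(\<Sum>k<m + l. \<bar>zs k a\<bar>) \<le> \<bar>\<bar>x a\<bar> + \<bar>x' a\<bar>\<bar>"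
      using sum_lessThan_append[where g="\<lambda>k. \<bar>ys k a\<bar>" and h="\<lambda>k. \<bar>ys' k a\<bar>"] s(3) s'(3)
      by (simp add: zs_def if_distrib if_distribR add_mono)
  qed
  ultimately have "(\<Sum>k<m + l. f (zs k)) \<in> dominated_sums f (\<lambda>a. \<bar>x a\<bar> + \<bar>x' a\<bar>)"
    by (rule dominated_sumsI)
  then show ?thesis
    using sum_lessThan_append[where g="\<lambda>k. f (ys k)" and h="\<lambda>k. f (ys' k)"] s(1) s'(1)
    by (simp add: zs_def if_distrib)
qed

lemma sum_mem_dominated_sums:
  "(\<forall>i<(n::nat). s i \<in> dominated_sums f (xs i)) \<Longrightarrow>
    (\<Sum>i<n. s i) \<in> dominated_sums f (\<lambda>a. \<Sum>i<n. \<bar>xs i a\<bar>)"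
proof (induction n)
  case 0
  show ?case using zero_mem_dominated_sums by simp
next
  case (Suc n)
  then have "(\<Sum>i<n. s i) + s n \<in> dominated_sums f (\<lambda>a. \<bar>\<Sum>i<n. \<bar>xs i a\<bar>\<bar> + \<bar>xs n a\<bar>)"
    by (intro add_mem_dominated_sums) auto
  then show ?case by (simp add: sum_nonneg)
qed

lemma scale_mem_dominated_sums:
  assumes "pos_homog f" "t > 0" "s \<in> dominated_sums f x"
  shows "t * s \<in> dominated_sums f (\<lambda>a. t * x a)"
proof -
  obtain n :: nat and ys where s: "s = (\<Sum>k<n. f (ys k))" "\<forall>k<n. ys k \<in> linf"
    "\<forall>a. (\<Sum>k<n. \<bar>ys k a\<bar>) \<le> \<bar>x a\<bar>"
    using assms(3) by (rule dominated_sumsE)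
  define zs where "zs k = (\<lambda>a. t * ys k a)" for k
  have "\<forall>k<n. zs k \<in> linf" using s(2) by (auto simp: zs_def intro: linf_scale)
  moreover have "\<forall>a. (\<Sum>k<n. \<bar>zs k a\<bar>) \<le> \<bar>t * x a\<bar>"
  proof
    fix a
    have "(\<Sum>k<n. \<bar>zs k a\<bar>) = t * (\<Sum>k<n. \<bar>ys k a\<bar>)"
      using assms(2) by (simp add: zs_def abs_mult sum_distrib_left)
    also have "\<dots> \<le> t * \<bar>x a\<bar>" using s(3) assms(2) by (simp add: mult_left_mono)
    finally show "(\<Sum>k<n. \<bar>zs k a\<bar>) \<le> \<bar>t * x a\<bar>" using assms(2) by (simp add: abs_mult)
  qed
  ultimately have "(\<Sum>k<n. f (zs k)) \<in> dominated_sums f (\<lambda>a. t * x a)"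
    by (rule dominated_sumsI)
  moreover have "f (zs k) = t * f (ys k)" if "k < n" for k
    using assms(1,2) s(2) that unfolding pos_homog_def zs_def by blast
  ultimately show ?thesis using s(1) by (simp add: sum_distrib_left)
qed

lemma dominated_sums_le_fbl_norm:
  assumes "fbl_norm f < \<infinity>" "\<forall>a. \<bar>x a\<bar> \<le> 1" "s \<in> dominated_sums f x"
  shows "s \<le> real_of_ereal (fbl_norm f)"
proof -
  obtain n :: nat and ys where s: "s = (\<Sum>k<n. f (ys k))" "\<forall>k<n. ys k \<in> linf"
    "\<forall>a. (\<Sum>k<n. \<bar>ys k a\<bar>) \<le> \<bar>x a\<bar>"
    using assms(3) by (rule dominated_sumsE)
  have "s \<le> (\<Sum>k<n. \<bar>f (ys k)\<bar>)" unfolding s(1) by (rule sum_mono) simp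
  also have "\<dots> \<le> real_of_ereal (fbl_norm f)"
    using s(2,3) assms(2) by (intro sum_abs_le_real_fbl_norm[OF assms(1)]) (auto intro: order_trans)
  finally show ?thesis .
qed

lemma bdd_above_dominated_sums:
  assumes "pos_homog f" "fbl_norm f < \<infinity>" "x \<in> linf"
  shows "bdd_above (dominated_sums f x)"
proof -
  obtain B0 where "\<forall>a. \<bar>x a\<bar> \<le> B0" using assms(3) unfolding linf_iff by blast
  then obtain B where B: "B > 0" "\<forall>a. \<bar>x a\<bar> \<le> B"
    by (intro that[of "max 1 B0"]) (auto simp: le_max_iff_disj)
  have "s \<le> B * real_of_ereal (fbl_norm f)" if "s \<in> dominated_sums f x" for s
  proof -
    have "\<forall>a. \<bar>(1 / B) * x a\<bar> \<le> 1" using B by (simp add: abs_mult)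
    moreover have "(1 / B) * s \<in> dominated_sums f (\<lambda>a. (1 / B) * x a)"
      using scale_mem_dominated_sums[OF assms(1) _ that, where t="1 / B"] B(1) by simp
    ultimately have "(1 / B) * s \<le> real_of_ereal (fbl_norm f)"
      by (rule dominated_sums_le_fbl_norm[OF assms(2)])
    then show ?thesis using B(1) by (simp add: field_simps)
  qed
  then show ?thesis by (rule bdd_aboveI)
qed

lemma H0_pos_nonneg: "f \<in> H0_pos \<Longrightarrow> x \<in> linf \<Longrightarrow> 0 \<le> f x"
  unfolding H0_pos_def by blast

text \<open>Outside linf the envelope is junk; none of pos_homog, fbl_norm and maximal_elem looks there.\<close>
definition envelope :: "(('a \<Rightarrow> real) \<Rightarrow> real) \<Rightarrow> ('a \<Rightarrow> real) \<Rightarrow> real" where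
  "envelope f x = Sup (dominated_sums f x)"

context
  fixes f :: "('a \<Rightarrow> real) \<Rightarrow> real"
  assumes f: "f \<in> H0_pos"
begin

private lemma homog: "pos_homog f" and fbl_norm_finite: "fbl_norm f < \<infinity>"
  using f unfolding H0_pos_def H0_def by auto

lemma bdd_above_dominated_sums_H0_pos: "x \<in> linf \<Longrightarrow> bdd_above (dominated_sums f x)"
  by (rule bdd_above_dominated_sums[OF homog fbl_norm_finite])

lemma le_envelope: "x \<in> linf \<Longrightarrow> f x \<le> envelope f x"
  unfolding envelope_def
  by (rule cSup_upper[OF mem_dominated_sums_single bdd_above_dominated_sums_H0_pos]) auto

lemma envelope_nonneg: "x \<in> linf \<Longrightarrow> 0 \<le> envelope f x"
  unfolding envelope_def
  by (rule cSup_upper[OF zero_mem_dominated_sums bdd_above_dominated_sums_H0_pos])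

lemma envelope_scale_le:
  assumes "x \<in> linf" "t > 0"
  shows "envelope f (\<lambda>a. t * x a) \<le> t * envelope f x"
  unfolding envelope_def
proof (rule cSup_least)
  show "dominated_sums f (\<lambda>a. t * x a) \<noteq> {}" by (rule dominated_sums_nonempty)
next
  fix s assume "s \<in> dominated_sums f (\<lambda>a. t * x a)"
  then have "(1 / t) * s \<in> dominated_sums f x"
    using scale_mem_dominated_sums[OF homog, of "1 / t"] assms(2) by fastforce
  then have "(1 / t) * s \<le> Sup (dominated_sums f x)"
    by (rule cSup_upper[OF _ bdd_above_dominated_sums_H0_pos[OF assms(1)]])
  then show "s \<le> t * Sup (dominated_sums f x)" using assms(2) by (simp add: field_simps)
qed

lemma pos_homog_envelope: "pos_homog (envelope f)"
  unfolding pos_homog_def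
proof (intro ballI allI impI antisym)
  fix x :: "'a \<Rightarrow> real" and t :: real assume x: "x \<in> linf" and t: "t > 0"
  show "envelope f (\<lambda>a. t * x a) \<le> t * envelope f x" by (rule envelope_scale_le[OF x t])
  have "(\<lambda>a. (1 / t) * (t * x a)) = x" using t by auto
  then have "envelope f x \<le> (1 / t) * envelope f (\<lambda>a. t * x a)"
    using envelope_scale_le[OF linf_scale[OF x, of t], of "1 / t"] t by simp
  then show "t * envelope f x \<le> envelope f (\<lambda>a. t * x a)" using t by (simp add: field_simps)
qed

lemma fbl_norm_envelope_le: "fbl_norm (envelope f) \<le> fbl_norm f"
  unfolding fbl_norm_def[of "envelope f"]
proof (rule SUP_least, clarify)
  fix n and xs :: "nat \<Rightarrow> 'a \<Rightarrow> real"
  assume xs: "\<forall>k<n. xs k \<in> linf" and le1: "\<forall>a. (\<Sum>k<n. \<bar>xs k a\<bar>) \<le> 1"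
  have "(\<Sum>k<n. Sup (dominated_sums f (xs k))) \<le> real_of_ereal (fbl_norm f)"
  proof (rule sum_cSup_le)
    show "\<forall>k<n. dominated_sums f (xs k) \<noteq> {} \<and> bdd_above (dominated_sums f (xs k))"
      using xs by (simp add: dominated_sums_nonempty bdd_above_dominated_sums_H0_pos)
    show "\<forall>s. (\<forall>k<n. s k \<in> dominated_sums f (xs k)) \<longrightarrow> (\<Sum>k<n. s k) \<le> real_of_ereal (fbl_norm f)"
    proof (intro allI impI)
      fix s assume "\<forall>k<n. s k \<in> dominated_sums f (xs k)"
      then have "(\<Sum>k<n. s k) \<in> dominated_sums f (\<lambda>a. \<Sum>k<n. \<bar>xs k a\<bar>)"
        by (rule sum_mem_dominated_sums)
      moreover have "\<forall>a. \<bar>\<Sum>k<n. \<bar>xs k a\<bar>\<bar> \<le> 1" using le1 by (simp add: sum_nonneg)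
      ultimately show "(\<Sum>k<n. s k) \<le> real_of_ereal (fbl_norm f)"
        by (intro dominated_sums_le_fbl_norm[OF fbl_norm_finite])
    qed
  qed
  moreover have "(\<Sum>k<n. \<bar>envelope f (xs k)\<bar>) = (\<Sum>k<n. Sup (dominated_sums f (xs k)))"
    using xs envelope_nonneg by (intro sum.cong) (auto simp: envelope_def)
  ultimately have "ereal (\<Sum>k<n. \<bar>envelope f (xs k)\<bar>) \<le> ereal (real_of_ereal (fbl_norm f))"
    by simp
  also have "\<dots> = fbl_norm f" using ereal_real_fbl_norm[OF fbl_norm_finite] .
  finally show "ereal (\<Sum>k<n. \<bar>envelope f (xs k)\<bar>) \<le> fbl_norm f" .
qed

lemma fbl_norm_le_envelope: "fbl_norm f \<le> fbl_norm (envelope f)"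
  unfolding fbl_norm_def
proof (rule SUP_subset_mono[OF order_refl], clarify)
  fix n and xs :: "nat \<Rightarrow> 'a \<Rightarrow> real"
  assume "\<forall>k<n. xs k \<in> linf"
  then have "(\<Sum>k<n. \<bar>f (xs k)\<bar>) \<le> (\<Sum>k<n. \<bar>envelope f (xs k)\<bar>)"
    using H0_pos_nonneg[OF f] le_envelope envelope_nonneg by (intro sum_mono) auto
  then show "ereal (\<Sum>k<n. \<bar>f (xs k)\<bar>) \<le> ereal (\<Sum>k<n. \<bar>envelope f (xs k)\<bar>)" by simp
qed

lemma envelope_mem_H0_pos: "envelope f \<in> H0_pos"
proof -
  have "fbl_norm (envelope f) < \<infinity>"
    using fbl_norm_envelope_le fbl_norm_finite by (rule le_less_trans)
  then show ?thesis
    using pos_homog_envelope envelope_nonneg unfolding H0_pos_def H0_def by blast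
qed

end

lemma maximal_elem_H0_pos: "maximal_elem f \<Longrightarrow> f \<in> H0_pos"
  unfolding maximal_elem_def by blast

lemma maximal_elem_envelope_eq:
  assumes "maximal_elem f" "x \<in> linf"
  shows "envelope f x = f x"
proof -
  have f: "f \<in> H0_pos" using assms(1) by (rule maximal_elem_H0_pos)
  have "fbl_norm (envelope f) = fbl_norm f"
    using fbl_norm_envelope_le[OF f] fbl_norm_le_envelope[OF f] by (rule antisym)
  moreover have "\<forall>x\<in>linf. f x \<le> envelope f x" using le_envelope[OF f] by blast
  ultimately have "\<forall>x\<in>linf. envelope f x = f x"
    using assms(1) envelope_mem_H0_pos[OF f] unfolding maximal_elem_def by blast
  then show ?thesis using assms(2) by blast
qed

lemma maximal_elem_dominated_sums_le:
  assumes "maximal_elem f" "x \<in> linf" "s \<in> dominated_sums f x"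
  shows "s \<le> f x"
proof -
  have "s \<le> envelope f x"
    unfolding envelope_def
    using assms(2,3) bdd_above_dominated_sums_H0_pos[OF maximal_elem_H0_pos[OF assms(1)]]
    by (intro cSup_upper)
  then show ?thesis using maximal_elem_envelope_eq[OF assms(1,2)] by simp
qed

lemma maximal_elem_mono_abs:
  assumes "maximal_elem f" "x \<in> linf" "y \<in> linf" "\<forall>a. \<bar>x a\<bar> \<le> \<bar>y a\<bar>"
  shows "f x \<le> f y"
  using assms by (intro maximal_elem_dominated_sums_le mem_dominated_sums_single)

lemma maximal_elem_superadditive:
  fixes n :: nat
  assumes "maximal_elem f" "\<forall>k<n. xs k \<in> linf \<and> (\<forall>a. 0 \<le> xs k a)"
  shows "(\<Sum>k<n. f (xs k)) \<le> f (\<lambda>a. \<Sum>k<n. xs k a)"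
proof (rule maximal_elem_dominated_sums_le[OF assms(1)])
  show "(\<lambda>a. \<Sum>k<n. xs k a) \<in> linf" using assms(2) by (intro linf_sum) blast
  have "(\<Sum>k<n. f (xs k)) \<in> dominated_sums f (\<lambda>a. \<Sum>k<n. \<bar>xs k a\<bar>)"
    using assms(2) by (intro sum_mem_dominated_sums allI impI mem_dominated_sums_single) auto
  moreover have "(\<lambda>a. \<Sum>k<n. \<bar>xs k a\<bar>) = (\<lambda>a. \<Sum>k<n. xs k a)"
    using assms(2) by (intro ext sum.cong) auto
  ultimately show "(\<Sum>k<n. f (xs k)) \<in> dominated_sums f (\<lambda>a. \<Sum>k<n. xs k a)" by simp
qed

lemma maximal_elem_fbl_norm_eq:
  assumes "maximal_elem f"
  shows "fbl_norm f = ereal (f (\<lambda>_. 1))"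
proof (rule antisym)
  have one: "(\<lambda>_. 1) \<in> linf" by (rule const_mem_linf)
  note nonneg = H0_pos_nonneg[OF maximal_elem_H0_pos[OF assms]]
  show "fbl_norm f \<le> ereal (f (\<lambda>_. 1))"
    unfolding fbl_norm_def
  proof (rule SUP_least, clarify)
    fix n and xs :: "nat \<Rightarrow> 'a \<Rightarrow> real"
    assume "\<forall>k<n. xs k \<in> linf" "\<forall>a. (\<Sum>k<n. \<bar>xs k a\<bar>) \<le> 1"
    then have "(\<Sum>k<n. f (xs k)) \<le> f (\<lambda>_. 1)"
      by (intro maximal_elem_dominated_sums_le[OF assms one] dominated_sumsI) auto
    then show "ereal (\<Sum>k<n. \<bar>f (xs k)\<bar>) \<le> ereal (f (\<lambda>_. 1))"
      using \<open>\<forall>k<n. xs k \<in> linf\<close> nonneg by simp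
  qed
  show "ereal (f (\<lambda>_. 1)) \<le> fbl_norm f"
    using sum_abs_le_fbl_norm[of 1 "\<lambda>_ _. 1" f] one nonneg[OF one] by simp
qed

lemma maximal_elem_sup_norm_eq:
  assumes "maximal_elem f"
  shows "sup_norm f = ereal (f (\<lambda>_. 1))"
  unfolding sup_norm_def
proof (rule antisym)
  have one: "(\<lambda>_. 1) \<in> linf" by (rule const_mem_linf)
  note nonneg = H0_pos_nonneg[OF maximal_elem_H0_pos[OF assms]]
  show "(SUP x\<in>{x. \<forall>a. \<bar>x a\<bar> \<le> 1}. ereal \<bar>f x\<bar>) \<le> ereal (f (\<lambda>_. 1))"
  proof (rule SUP_least)
    fix x :: "'a \<Rightarrow> real" assume "x \<in> {x. \<forall>a. \<bar>x a\<bar> \<le> 1}"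
    then have "x \<in> linf" "\<forall>a. \<bar>x a\<bar> \<le> \<bar>1\<bar>" by (auto simp: linf_iff)
    then show "ereal \<bar>f x\<bar> \<le> ereal (f (\<lambda>_. 1))"
      using maximal_elem_mono_abs[OF assms _ one] nonneg by simp
  qed
  show "ereal (f (\<lambda>_. 1)) \<le> (SUP x\<in>{x. \<forall>a. \<bar>x a\<bar> \<le> 1}. ereal \<bar>f x\<bar>)"
    by (rule SUP_upper2[where i="\<lambda>_. 1"]) auto
qed

theorem lemma4p5:
  fixes f :: "('a \<Rightarrow> real) \<Rightarrow> real"
  assumes "maximal_elem f"
  shows "(\<forall>x\<in>linf. \<forall>y\<in>linf. (\<forall>a. \<bar>x a\<bar> \<le> \<bar>y a\<bar>) \<longrightarrow> f x \<le> f y)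
    \<and> (\<forall>(n::nat) (xs::nat \<Rightarrow> 'a \<Rightarrow> real).
          (\<forall>k<n. xs k \<in> linf \<and> (\<forall>a. 0 \<le> xs k a)) \<longrightarrow>
          (\<Sum>k<n. f (xs k)) \<le> f (\<lambda>a. \<Sum>k<n. xs k a))
    \<and> fbl_norm f = sup_norm f"
  using maximal_elem_mono_abs[OF assms] maximal_elem_superadditive[OF assms]
    maximal_elem_fbl_norm_eq[OF assms] maximal_elem_sup_norm_eq[OF assms]
  by simp

end
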